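(* Let $G=(V,E)$ be a connected simple graph with a set-valued metric $\Omega(-,-)$. Then $d_G(x,y)\ge|\Omega(x,y)|$ for all $x,y\in V$, where $d_G$ is the graph distance.
   Context: For a connected simple graph $G=(V,E)$ and a set $\Omega$, a set-valued metric on $G$ is a function $\Omega(-,-):V\times V\to 2^{\Omega}$ such that $\Omega(x,y)=\Omega(y,x)$ for all $x,y$; $|\Omega(x,y)|=1$ whenever $\{x,y\}\in E$; and $\Omega(x,z)=\Omega(x,y)\triangle\Omega(y,z)$ for all $x,y,z$, where $\triangle$ is symmetric difference. *)

theory Defs
  imports Main
begin

definition simple_graph :: "'a set \<Rightarrow> ('a \<Rightarrow> 'a \<Rightarrow> bool) \<Rightarrow> bool" where
  "simple_graph V E \<longleftrightarrow>
     (\<forall>x y. E x y \<longrightarrow> x \<in> V \<and> y \<in> V) \<and>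
     (\<forall>x y. E x y \<longrightarrow> E y x) \<and> (\<forall>x. \<not> E x x)"

definition is_walk :: "('a \<Rightarrow> 'a \<Rightarrow> bool) \<Rightarrow> 'a \<Rightarrow> 'a \<Rightarrow> 'a list \<Rightarrow> bool" where
  "is_walk E x y ps \<longleftrightarrow> ps \<noteq> [] \<and> hd ps = x \<and> last ps = y \<and>
     (\<forall>i. Suc i < length ps \<longrightarrow> E (ps ! i) (ps ! Suc i))"

definition connected_graph :: "'a set \<Rightarrow> ('a \<Rightarrow> 'a \<Rightarrow> bool) \<Rightarrow> bool" where
  "connected_graph V E \<longleftrightarrow> V \<noteq> {} \<and> (\<forall>x\<in>V. \<forall>y\<in>V. \<exists>ps. is_walk E x y ps)"

definition graph_dist :: "('a \<Rightarrow> 'a \<Rightarrow> bool) \<Rightarrow> 'a \<Rightarrow> 'a \<Rightarrow> nat" where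
  "graph_dist E x y = (LEAST n. \<exists>ps. is_walk E x y ps \<and> length ps = Suc n)"

definition set_valued_metric ::
  "'a set \<Rightarrow> ('a \<Rightarrow> 'a \<Rightarrow> bool) \<Rightarrow> ('a \<Rightarrow> 'a \<Rightarrow> 'b set) \<Rightarrow> bool" where
  "set_valued_metric V E Om \<longleftrightarrow>
     (\<forall>x\<in>V. \<forall>y\<in>V. Om x y = Om y x) \<and>
     (\<forall>x y. E x y \<longrightarrow> card (Om x y) = 1) \<and>
     (\<forall>x\<in>V. \<forall>y\<in>V. \<forall>z\<in>V. Om x z = (Om x y - Om y z) \<union> (Om y z - Om x y))"

end

theory Submission
  imports Defs
begin

text \<open>Along a walk from \<open>x\<close> to \<open>y\<close> the identity
  \<open>\<Omega>(x,y) = \<Omega>(x,v) \<triangle> \<Omega>(v,y)\<close> for the second vertex \<open>v\<close> lets us peel off one edge at a time.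
  Each edge contributes a singleton and a symmetric difference has at most as many elements as
  its two operands together, so \<open>|\<Omega>(x,y)|\<close> is bounded by the length of every walk, in particular
  of a shortest one.\<close>

lemma card_sym_diff_le:
  assumes "finite A" "finite B"
  shows "card ((A - B) \<union> (B - A)) \<le> card A + card B"
proof -
  have "card ((A - B) \<union> (B - A)) \<le> card (A - B) + card (B - A)" by (rule card_Un_le)
  also have "\<dots> \<le> card A + card B"
    using assms by (intro add_mono card_mono) auto
  finally show ?thesis .
qed

lemma is_walk_singleton_iff: "is_walk E x y [v] \<longleftrightarrow> x = v \<and> y = v"
  unfolding is_walk_def by auto

lemma is_walk_Cons_Cons_iff:
  "is_walk E x y (u # v # ps) \<longleftrightarrow> x = u \<and> E u v \<and> is_walk E v y (v # ps)"
proof -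
  have "(\<forall>i. Suc i < length (u # v # ps) \<longrightarrow> E ((u # v # ps) ! i) ((u # v # ps) ! Suc i))
    \<longleftrightarrow> E u v \<and> (\<forall>i. Suc i < length (v # ps) \<longrightarrow> E ((v # ps) ! i) ((v # ps) ! Suc i))"
    (is "?all \<longleftrightarrow> _")
  proof
    assume all: ?all
    show "E u v \<and> (\<forall>i. Suc i < length (v # ps) \<longrightarrow> E ((v # ps) ! i) ((v # ps) ! Suc i))"
    proof (intro conjI allI impI)
      show "E u v" using all[rule_format, of 0] by simp
    next
      fix i assume "Suc i < length (v # ps)"
      then show "E ((v # ps) ! i) ((v # ps) ! Suc i)" using all[rule_format, of "Suc i"] by simp
    qed
  next
    assume *: "E u v \<and> (\<forall>i. Suc i < length (v # ps) \<longrightarrow> E ((v # ps) ! i) ((v # ps) ! Suc i))"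
    show ?all
    proof (intro allI impI)
      fix i assume "Suc i < length (u # v # ps)"
      with * show "E ((u # v # ps) ! i) ((u # v # ps) ! Suc i)" by (cases i) auto
    qed
  qed
  then show ?thesis unfolding is_walk_def by auto
qed

lemma is_walk_last_in_vertices:
  assumes "simple_graph V E" "is_walk E x y ps" "x \<in> V"
  shows "y \<in> V"
  using assms(2,3)
proof (induction ps arbitrary: x rule: induct_list012)
  case 1 then show ?case by (simp add: is_walk_def)
next
  case (2 v) then show ?case by (simp add: is_walk_singleton_iff)
next
  case (3 u v ps)
  then have "E x v" "is_walk E v y (v # ps)" by (simp_all add: is_walk_Cons_Cons_iff)
  with assms(1) 3 show ?case unfolding simple_graph_def by blast
qed

lemma set_valued_metric_self:
  assumes "set_valued_metric V E Om" "x \<in> V"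
  shows "Om x x = {}"
  using assms unfolding set_valued_metric_def by (metis Diff_cancel Un_absorb)

lemma card_set_valued_metric_le_walk_length:
  assumes "simple_graph V E" "set_valued_metric V E Om"
    and "is_walk E x y ps" "x \<in> V"
  shows "finite (Om x y) \<and> card (Om x y) \<le> length ps - 1"
  using assms(3,4)
proof (induction ps arbitrary: x rule: induct_list012)
  case 1 then show ?case by (simp add: is_walk_def)
next
  case (2 v)
  then show ?case using set_valued_metric_self[OF assms(2)] by (simp add: is_walk_singleton_iff)
next
  case (3 u v ps)
  then have edge: "E x v" and walk: "is_walk E v y (v # ps)"
    by (simp_all add: is_walk_Cons_Cons_iff)
  have "v \<in> V" using assms(1) edge unfolding simple_graph_def by blast
  then have IH: "finite (Om v y) \<and> card (Om v y) \<le> length ps"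
    using "3.IH"(2) walk by simp
  have "y \<in> V" using is_walk_last_in_vertices[OF assms(1) walk \<open>v \<in> V\<close>] .
  then have split: "Om x y = (Om x v - Om v y) \<union> (Om v y - Om x v)"
    using assms(2) \<open>x \<in> V\<close> \<open>v \<in> V\<close> unfolding set_valued_metric_def by blast
  have card_edge: "card (Om x v) = 1" using assms(2) edge unfolding set_valued_metric_def by blast
  then have "finite (Om x v)" by (metis card.infinite zero_neq_one)
  then have "card (Om x y) \<le> card (Om x v) + card (Om v y)"
    unfolding split using IH by (intro card_sym_diff_le) auto
  moreover have "finite (Om x y)" unfolding split using \<open>finite (Om x v)\<close> IH by auto
  ultimately show ?case using card_edge IH by simp
qed

lemma graph_dist_attained:
  assumes "is_walk E x y ps"
  shows "\<exists>qs. is_walk E x y qs \<and> length qs = Suc (graph_dist E x y)"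
proof -
  have "\<exists>n qs. is_walk E x y qs \<and> length qs = Suc n"
    using assms unfolding is_walk_def by (metis length_greater_0_conv Suc_pred)
  then show ?thesis unfolding graph_dist_def by (rule LeastI_ex)
qed

theorem proposition3p5:
  fixes V :: "'a set" and E :: "'a \<Rightarrow> 'a \<Rightarrow> bool" and Om :: "'a \<Rightarrow> 'a \<Rightarrow> 'b set"
  assumes "simple_graph V E" and "connected_graph V E"
    and "set_valued_metric V E Om"
    and "x \<in> V" and "y \<in> V"
  shows "graph_dist E x y \<ge> card (Om x y)"
proof -
  obtain ps where "is_walk E x y ps"
    using assms(2,4,5) unfolding connected_graph_def by blast
  then obtain qs where "is_walk E x y qs" "length qs = Suc (graph_dist E x y)"
    by (blast dest: graph_dist_attained)
  then show ?thesis
    using card_set_valued_metric_le_walk_length[OF assms(1,3) _ assms(4)] by fastforce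
qed

end
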